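(* Let $T>0$, let $(\pi_n)$ be a sequence of regular partitions of $[0,T]$, i.e. $t^n_k=kT/N_n$ for $k=0,\dots,N_n$ with $(N_n)$ strictly increasing natural numbers, and let $X=\{X(t)\colon t\in[0,T]\}$ be a mean zero second order process satisfying (C1) and (C2) with constants $\gamma\in(0,1)$, $\kappa>0$. Then $$\mathbb{E}V^{(2)}_{N_n}(X,2)\longrightarrow\kappa^2(4-2^{2\gamma})T\qquad(n\to\infty),$$ where $V^{(2)}_{N_n}(X,2)=(T^{-1}N_n)^{2\gamma-1}\sum_{k=1}^{N_n-1}\big(X(t^n_{k+1})-2X(t^n_k)+X(t^n_{k-1})\big)^2$.
   Context: $\sigma_X^2(s,t)=\mathbb{E}[X(t)-X(s)]^2$. $\Psi$ is the class of continuous $\varphi\colon(0,T]\to[0,\infty)$ with $\varphi(h)\to0$, $L(h):=\varphi(h)/h\to\infty$, $hL(h)^3\to0$ as $h\downarrow0$. (C1): $\sigma_X(0,\delta)=O(\delta^\gamma)$ as $\delta\downarrow0$. (C2): for every $\varphi\in\Psi$, $\sup_{\varphi(\delta)\le t\le T-\delta}\sup_{0<h\le\delta}|\sigma_X(t,t+h)/(\kappa h^\gamma)-1|\to0$ as $\delta\downarrow0$. *)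

theory Defs
  imports "HOL-Probability.Probability" "HOL-Library.Landau_Symbols"
begin

definition second_order_process ::
  "'a measure \<Rightarrow> real \<Rightarrow> (real \<Rightarrow> 'a \<Rightarrow> real) \<Rightarrow> bool" where
  "second_order_process M T X \<longleftrightarrow>
     (\<forall>t\<in>{0..T}. X t \<in> borel_measurable M \<and> integrable M (\<lambda>\<omega>. (X t \<omega>)\<^sup>2))"

definition mean_zero :: "'a measure \<Rightarrow> real \<Rightarrow> (real \<Rightarrow> 'a \<Rightarrow> real) \<Rightarrow> bool" where
  "mean_zero M T X \<longleftrightarrow> (\<forall>t\<in>{0..T}. integral\<^sup>L M (X t) = 0)"

definition sigmaX :: "'a measure \<Rightarrow> (real \<Rightarrow> 'a \<Rightarrow> real) \<Rightarrow> real \<Rightarrow> real \<Rightarrow> real" where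
  "sigmaX M X s t = sqrt (integral\<^sup>L M (\<lambda>\<omega>. (X t \<omega> - X s \<omega>)\<^sup>2))"

definition PsiClass :: "real \<Rightarrow> (real \<Rightarrow> real) set" where
  "PsiClass T = {\<phi>. continuous_on {0<..T} \<phi> \<and> (\<forall>h\<in>{0<..T}. \<phi> h \<ge> 0)
      \<and> (\<phi> \<longlongrightarrow> 0) (at_right 0)
      \<and> filterlim (\<lambda>h. \<phi> h / h) at_top (at_right 0)
      \<and> ((\<lambda>h. h * (\<phi> h / h) ^ 3) \<longlongrightarrow> 0) (at_right 0)}"

definition condC1 :: "'a measure \<Rightarrow> (real \<Rightarrow> 'a \<Rightarrow> real) \<Rightarrow> real \<Rightarrow> bool" where
  "condC1 M X \<gamma> \<longleftrightarrow> (\<lambda>\<delta>. sigmaX M X 0 \<delta>) \<in> O[at_right 0](\<lambda>\<delta>. \<delta> powr \<gamma>)"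

text \<open>sup over the set tends to 0, unfolded as: for every eps, eventually all terms are \<le> eps.\<close>
definition condC2 :: "'a measure \<Rightarrow> real \<Rightarrow> (real \<Rightarrow> 'a \<Rightarrow> real) \<Rightarrow> real \<Rightarrow> real \<Rightarrow> bool" where
  "condC2 M T X \<gamma> \<kappa> \<longleftrightarrow> (\<forall>\<phi>\<in>PsiClass T. \<forall>\<epsilon>>0. eventually (\<lambda>\<delta>.
      \<forall>t h. \<phi> \<delta> \<le> t \<and> t \<le> T - \<delta> \<and> 0 < h \<and> h \<le> \<delta> \<longrightarrow>
        \<bar>sigmaX M X t (t + h) / (\<kappa> * h powr \<gamma>) - 1\<bar> \<le> \<epsilon>) (at_right 0))"

definition V2 :: "real \<Rightarrow> real \<Rightarrow> nat \<Rightarrow> (real \<Rightarrow> 'a \<Rightarrow> real) \<Rightarrow> 'a \<Rightarrow> real" where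
  "V2 T \<gamma> N X \<omega> = (real N / T) powr (2 * \<gamma> - 1) *
     (\<Sum>k=1..N-1. (X (real (k+1) * T / N) \<omega> - 2 * X (real k * T / N) \<omega>
                    + X (real (k-1) * T / N) \<omega>)\<^sup>2)"

end

theory Submission
  imports Defs "HOL-Real_Asymp.Real_Asymp"
begin

text \<open>
  With \<open>h = T/N\<close> and the second differences \<open>D_k = X(t_{k+1}) - 2 X(t_k) + X(t_{k-1})\<close>,
  polarization gives \<open>E D_k^2 = 2 \<sigma>(t_k,t_{k+1})^2 + 2 \<sigma>(t_{k-1},t_k)^2 - \<sigma>(t_{k-1},t_{k+1})^2\<close>.
  Wherever (C2) applies, i.e. for \<open>t_{k-1} \<ge> \<phi>(2h)\<close>, this is \<open>\<kappa>^2 h^{2\<gamma>} (4 - 2^{2\<gamma>})\<close> up to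
  a relative error \<open>O(\<epsilon>)\<close>, and after the normalisation by \<open>h^{1-2\<gamma>}\<close> these terms add up to
  \<open>\<kappa>^2 (4 - 2^{2\<gamma>}) T\<close>. The at most \<open>\<phi>(2h)/h + 1\<close> remaining terms lie in a boundary layer
  at the origin, where (C1) bounds each of them by \<open>O(\<phi>(2h)^{2\<gamma>})\<close>. For \<open>\<phi>(h) = h^{3/4}\<close> their
  total contribution is \<open>O(h^{3/4 - \<gamma>/2})\<close>, which vanishes because \<open>\<gamma> < 1\<close>.
\<close>

lemma powr_squared: "(x powr a)\<^sup>2 = x powr (2 * a)" for x a :: real
  by (simp add: power2_eq_square powr_add[symmetric])

lemma sigmaX_squared: "(sigmaX M X s t)\<^sup>2 = integral\<^sup>L M (\<lambda>\<omega>. (X t \<omega> - X s \<omega>)\<^sup>2)"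
  unfolding sigmaX_def by (simp add: integral_nonneg)

lemma integrable_increment_squared:
  assumes "second_order_process M T X" "s \<in> {0..T}" "t \<in> {0..T}"
  shows "integrable M (\<lambda>\<omega>. (X t \<omega> - X s \<omega>)\<^sup>2)"
proof (rule Bochner_Integration.integrable_bound)
  show "integrable M (\<lambda>\<omega>. 2 * (X t \<omega>)\<^sup>2 + 2 * (X s \<omega>)\<^sup>2)"
    using assms by (auto simp: second_order_process_def)
  have "X s \<in> borel_measurable M" "X t \<in> borel_measurable M"
    using assms by (auto simp: second_order_process_def)
  then show "(\<lambda>\<omega>. (X t \<omega> - X s \<omega>)\<^sup>2) \<in> borel_measurable M"
    by measurable
  have "(u - v)\<^sup>2 \<le> 2 * u\<^sup>2 + 2 * v\<^sup>2" for u v :: real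
    using zero_le_power2[of "u + v"] by (simp add: power2_eq_square algebra_simps)
  then show "AE \<omega> in M. norm ((X t \<omega> - X s \<omega>)\<^sup>2) \<le> norm (2 * (X t \<omega>)\<^sup>2 + 2 * (X s \<omega>)\<^sup>2)"
    by simp
qed

definition second_diff_moment ::
  "'a measure \<Rightarrow> (real \<Rightarrow> 'a \<Rightarrow> real) \<Rightarrow> real \<Rightarrow> real \<Rightarrow> real \<Rightarrow> real" where
  "second_diff_moment M X s t u = integral\<^sup>L M (\<lambda>\<omega>. (X u \<omega> - 2 * X t \<omega> + X s \<omega>)\<^sup>2)"

lemma second_diff_moment_nonneg: "0 \<le> second_diff_moment M X s t u"
  by (simp add: second_diff_moment_def integral_nonneg)

lemma second_diff_moment_polarization:
  assumes "second_order_process M T X" "s \<in> {0..T}" "t \<in> {0..T}" "u \<in> {0..T}"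
  shows "integrable M (\<lambda>\<omega>. (X u \<omega> - 2 * X t \<omega> + X s \<omega>)\<^sup>2)"
    and "second_diff_moment M X s t u
      = 2 * (sigmaX M X t u)\<^sup>2 + 2 * (sigmaX M X s t)\<^sup>2 - (sigmaX M X s u)\<^sup>2"
proof -
  have eq: "(\<lambda>\<omega>. (X u \<omega> - 2 * X t \<omega> + X s \<omega>)\<^sup>2) = (\<lambda>\<omega>.
      2 * (X u \<omega> - X t \<omega>)\<^sup>2 + 2 * (X t \<omega> - X s \<omega>)\<^sup>2 - (X u \<omega> - X s \<omega>)\<^sup>2)"
    by (simp add: fun_eq_iff power2_eq_square algebra_simps)
  note int = integrable_increment_squared[OF assms(1)]
  show "integrable M (\<lambda>\<omega>. (X u \<omega> - 2 * X t \<omega> + X s \<omega>)\<^sup>2)"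
    unfolding eq using int assms by auto
  show "second_diff_moment M X s t u
      = 2 * (sigmaX M X t u)\<^sup>2 + 2 * (sigmaX M X s t)\<^sup>2 - (sigmaX M X s u)\<^sup>2"
    unfolding second_diff_moment_def sigmaX_squared eq using int assms by simp
qed

lemma second_diff_moment_le_origin_increments:
  assumes "second_order_process M T X" "s \<in> {0..T}" "t \<in> {0..T}" "u \<in> {0..T}"
  shows "second_diff_moment M X s t u
    \<le> 3 * ((sigmaX M X 0 u)\<^sup>2 + 4 * (sigmaX M X 0 t)\<^sup>2 + (sigmaX M X 0 s)\<^sup>2)"
proof -
  have "0 \<in> {0..T}" using assms by auto
  note int = integrable_increment_squared[OF assms(1) this]
  have sq3: "(x + y + z)\<^sup>2 \<le> 3 * (x\<^sup>2 + y\<^sup>2 + z\<^sup>2)" for x y z :: real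
    using zero_le_power2[of "x - y"] zero_le_power2[of "y - z"] zero_le_power2[of "x - z"]
    by (simp add: power2_eq_square algebra_simps)
  have "second_diff_moment M X s t u \<le> integral\<^sup>L M (\<lambda>\<omega>.
      3 * ((X u \<omega> - X 0 \<omega>)\<^sup>2 + 4 * (X t \<omega> - X 0 \<omega>)\<^sup>2 + (X s \<omega> - X 0 \<omega>)\<^sup>2))"
    unfolding second_diff_moment_def
  proof (rule integral_mono)
    fix \<omega>
    have "(X u \<omega> - 2 * X t \<omega> + X s \<omega>)\<^sup>2
        = ((X u \<omega> - X 0 \<omega>) + (- 2 * (X t \<omega> - X 0 \<omega>)) + (X s \<omega> - X 0 \<omega>))\<^sup>2"
      by (simp add: algebra_simps)
    also have "\<dots> \<le> 3 * ((X u \<omega> - X 0 \<omega>)\<^sup>2 + (- 2 * (X t \<omega> - X 0 \<omega>))\<^sup>2 + (X s \<omega> - X 0 \<omega>)\<^sup>2)"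
      by (rule sq3)
    also have "(- 2 * (X t \<omega> - X 0 \<omega>))\<^sup>2 = 4 * (X t \<omega> - X 0 \<omega>)\<^sup>2"
      by (simp add: power2_eq_square algebra_simps)
    finally show "(X u \<omega> - 2 * X t \<omega> + X s \<omega>)\<^sup>2
        \<le> 3 * ((X u \<omega> - X 0 \<omega>)\<^sup>2 + 4 * (X t \<omega> - X 0 \<omega>)\<^sup>2 + (X s \<omega> - X 0 \<omega>)\<^sup>2)" .
  qed (use second_diff_moment_polarization(1)[OF assms] int assms in auto)
  also have "\<dots> = 3 * ((sigmaX M X 0 u)\<^sup>2 + 4 * (sigmaX M X 0 t)\<^sup>2 + (sigmaX M X 0 s)\<^sup>2)"
    unfolding sigmaX_squared using int assms by simp
  finally show ?thesis .
qed

lemma second_diff_moment_near_origin: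
  assumes "second_order_process M T X" "0 \<le> s" "s \<le> t" "t \<le> u" "u \<le> T" "u \<le> R" "0 \<le> \<gamma>"
    and origin: "\<And>y. 0 < y \<Longrightarrow> y \<le> R \<Longrightarrow> sigmaX M X 0 y \<le> C * y powr \<gamma>"
  shows "second_diff_moment M X s t u \<le> 18 * C\<^sup>2 * R powr (2 * \<gamma>)"
proof -
  have bound: "(sigmaX M X 0 y)\<^sup>2 \<le> C\<^sup>2 * R powr (2 * \<gamma>)" if "0 \<le> y" "y \<le> R" for y
  proof (cases "y = 0")
    case False
    then have "(sigmaX M X 0 y)\<^sup>2 \<le> (C * y powr \<gamma>)\<^sup>2"
      using origin[of y] that by (intro power_mono) (auto simp: sigmaX_def)
    also have "\<dots> \<le> C\<^sup>2 * R powr (2 * \<gamma>)"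
      unfolding power_mult_distrib powr_squared
      using that assms(7) by (intro mult_left_mono powr_mono2) auto
    finally show ?thesis .
  qed (simp add: sigmaX_def)
  have "second_diff_moment M X s t u
      \<le> 3 * ((sigmaX M X 0 u)\<^sup>2 + 4 * (sigmaX M X 0 t)\<^sup>2 + (sigmaX M X 0 s)\<^sup>2)"
    using assms by (intro second_diff_moment_le_origin_increments[OF assms(1)]) auto
  also have "\<dots> \<le> 3 * (C\<^sup>2 * R powr (2 * \<gamma>) + 4 * (C\<^sup>2 * R powr (2 * \<gamma>)) + C\<^sup>2 * R powr (2 * \<gamma>))"
    using bound[of u] bound[of t] bound[of s] assms by auto
  finally show ?thesis by simp
qed

lemma polarization_error_bound:
  fixes a b c \<kappa> p q \<epsilon> :: real
  assumes "\<bar>a / (\<kappa> * p) - 1\<bar> \<le> \<epsilon>" "\<bar>b / (\<kappa> * p) - 1\<bar> \<le> \<epsilon>" "\<bar>c / (\<kappa> * (q * p)) - 1\<bar> \<le> \<epsilon>"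
    and "\<epsilon> \<le> 1" "\<kappa> > 0" "p > 0" "0 < q" "q \<le> 2"
  shows "\<bar>2 * a\<^sup>2 + 2 * b\<^sup>2 - c\<^sup>2 - \<kappa>\<^sup>2 * p\<^sup>2 * (4 - q\<^sup>2)\<bar> \<le> 24 * \<kappa>\<^sup>2 * p\<^sup>2 * \<epsilon>"
proof -
  define A B C where "A = a / (\<kappa> * p)" and "B = b / (\<kappa> * p)" and "C = c / (\<kappa> * (q * p))"
  have abc: "a = \<kappa> * p * A" "b = \<kappa> * p * B" "c = \<kappa> * p * q * C"
    using assms by (auto simp: A_def B_def C_def)
  have sq: "\<bar>Z\<^sup>2 - 1\<bar> \<le> 3 * \<epsilon>" if "\<bar>Z - 1\<bar> \<le> \<epsilon>" for Z
  proof -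
    have "\<bar>Z\<^sup>2 - 1\<bar> = \<bar>Z - 1\<bar> * \<bar>Z + 1\<bar>"
      by (simp add: power2_eq_square algebra_simps abs_mult[symmetric])
    also have "\<dots> \<le> \<epsilon> * 3" using that assms(4) by (intro mult_mono) auto
    finally show ?thesis by simp
  qed
  have ABC: "\<bar>A\<^sup>2 - 1\<bar> \<le> 3 * \<epsilon>" "\<bar>B\<^sup>2 - 1\<bar> \<le> 3 * \<epsilon>" "\<bar>C\<^sup>2 - 1\<bar> \<le> 3 * \<epsilon>"
    using sq assms(1-3) by (auto simp: A_def B_def C_def)
  have "\<bar>q\<^sup>2 * (C\<^sup>2 - 1)\<bar> \<le> 4 * (3 * \<epsilon>)"
    unfolding abs_mult using power_mono[of q 2 2] assms(7,8) ABC(3) by (intro mult_mono) auto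
  then have err: "\<bar>2 * (A\<^sup>2 - 1) + 2 * (B\<^sup>2 - 1) - q\<^sup>2 * (C\<^sup>2 - 1)\<bar> \<le> 24 * \<epsilon>"
    using ABC by (smt (verit))
  have "2 * a\<^sup>2 + 2 * b\<^sup>2 - c\<^sup>2 - \<kappa>\<^sup>2 * p\<^sup>2 * (4 - q\<^sup>2)
      = \<kappa>\<^sup>2 * p\<^sup>2 * (2 * (A\<^sup>2 - 1) + 2 * (B\<^sup>2 - 1) - q\<^sup>2 * (C\<^sup>2 - 1))"
    unfolding abc by (simp add: power_mult_distrib algebra_simps)
  also have "\<bar>\<dots>\<bar> = \<kappa>\<^sup>2 * p\<^sup>2 * \<bar>2 * (A\<^sup>2 - 1) + 2 * (B\<^sup>2 - 1) - q\<^sup>2 * (C\<^sup>2 - 1)\<bar>"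
    by (simp add: abs_mult)
  also have "\<dots> \<le> \<kappa>\<^sup>2 * p\<^sup>2 * (24 * \<epsilon>)"
    using err by (intro mult_left_mono) auto
  finally show ?thesis by simp
qed

lemma second_diff_moment_interior:
  assumes "second_order_process M T X" "0 \<le> s" "s + 2 * h \<le> T" "0 < h"
    and "\<kappa> > 0" "0 \<le> \<gamma>" "\<gamma> \<le> 1" "\<epsilon> \<le> 1"
    and "\<bar>sigmaX M X s (s + h) / (\<kappa> * h powr \<gamma>) - 1\<bar> \<le> \<epsilon>"
    and "\<bar>sigmaX M X (s + h) (s + 2 * h) / (\<kappa> * h powr \<gamma>) - 1\<bar> \<le> \<epsilon>"
    and "\<bar>sigmaX M X s (s + 2 * h) / (\<kappa> * (2 * h) powr \<gamma>) - 1\<bar> \<le> \<epsilon>"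
  shows "\<bar>second_diff_moment M X s (s + h) (s + 2 * h)
      - \<kappa>\<^sup>2 * h powr (2 * \<gamma>) * (4 - 2 powr (2 * \<gamma>))\<bar> \<le> 24 * \<kappa>\<^sup>2 * h powr (2 * \<gamma>) * \<epsilon>"
proof -
  have "2 powr \<gamma> \<le> 2 powr 1" using assms(7) by (intro powr_mono) auto
  then have "\<bar>2 * (sigmaX M X (s + h) (s + 2 * h))\<^sup>2 + 2 * (sigmaX M X s (s + h))\<^sup>2
      - (sigmaX M X s (s + 2 * h))\<^sup>2 - \<kappa>\<^sup>2 * (h powr \<gamma>)\<^sup>2 * (4 - (2 powr \<gamma>)\<^sup>2)\<bar>
      \<le> 24 * \<kappa>\<^sup>2 * (h powr \<gamma>)\<^sup>2 * \<epsilon>"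
    using assms by (intro polarization_error_bound) (auto simp: powr_mult)
  moreover have "second_diff_moment M X s (s + h) (s + 2 * h)
      = 2 * (sigmaX M X (s + h) (s + 2 * h))\<^sup>2 + 2 * (sigmaX M X s (s + h))\<^sup>2
        - (sigmaX M X s (s + 2 * h))\<^sup>2"
    using assms by (intro second_diff_moment_polarization(2)[OF assms(1)]) auto
  ultimately show ?thesis by (simp add: powr_squared)
qed

lemma second_diff_moment_deviation_le:
  assumes sop: "second_order_process M T X" and s: "0 \<le> s" "s + 2 * h \<le> T" and h: "0 < h"
    and \<gamma>: "0 \<le> \<gamma>" "\<gamma> \<le> 1" and \<kappa>: "\<kappa> > 0" and \<epsilon>: "0 \<le> \<epsilon>" "\<epsilon> \<le> 1"
    and step: "\<And>t. a \<le> t \<Longrightarrow> t + h \<le> T \<Longrightarrow>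
      \<bar>sigmaX M X t (t + h) / (\<kappa> * h powr \<gamma>) - 1\<bar> \<le> \<epsilon>"
    and double_step: "\<And>t. a \<le> t \<Longrightarrow> t + 2 * h \<le> T \<Longrightarrow>
      \<bar>sigmaX M X t (t + 2 * h) / (\<kappa> * (2 * h) powr \<gamma>) - 1\<bar> \<le> \<epsilon>"
    and origin: "\<And>y. 0 < y \<Longrightarrow> y \<le> a + 2 * h \<Longrightarrow> sigmaX M X 0 y \<le> C * y powr \<gamma>"
  shows "\<bar>second_diff_moment M X s (s + h) (s + 2 * h) - \<kappa>\<^sup>2 * h powr (2 * \<gamma>) * (4 - 2 powr (2 * \<gamma>))\<bar>
    \<le> 24 * \<kappa>\<^sup>2 * h powr (2 * \<gamma>) * \<epsilon>
      + (if s < a then 18 * C\<^sup>2 * (a + 2 * h) powr (2 * \<gamma>) + 4 * \<kappa>\<^sup>2 * h powr (2 * \<gamma>) else 0)"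
proof (cases "s < a")
  case False
  then have "\<bar>sigmaX M X s (s + h) / (\<kappa> * h powr \<gamma>) - 1\<bar> \<le> \<epsilon>"
    "\<bar>sigmaX M X (s + h) (s + 2 * h) / (\<kappa> * h powr \<gamma>) - 1\<bar> \<le> \<epsilon>"
    "\<bar>sigmaX M X s (s + 2 * h) / (\<kappa> * (2 * h) powr \<gamma>) - 1\<bar> \<le> \<epsilon>"
    using s h step[of s] step[of "s + h"] double_step[of s]
    unfolding add.assoc[of s h h, unfolded mult_2[symmetric]] by auto
  then show ?thesis
    using False s h \<gamma> \<kappa> \<epsilon> by (simp add: second_diff_moment_interior[OF sop])
next
  case True
  define m where "m = \<kappa>\<^sup>2 * h powr (2 * \<gamma>) * (4 - 2 powr (2 * \<gamma>))"
  have "second_diff_moment M X s (s + h) (s + 2 * h) \<le> 18 * C\<^sup>2 * (a + 2 * h) powr (2 * \<gamma>)"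
    using True s h \<gamma> by (intro second_diff_moment_near_origin[OF sop _ _ _ _ _ _ origin]) auto
  moreover have "0 \<le> second_diff_moment M X s (s + h) (s + 2 * h)"
    by (rule second_diff_moment_nonneg)
  moreover have "1 \<le> 2 powr (2 * \<gamma>)" "2 powr (2 * \<gamma>) \<le> 4"
    using powr_mono[of 0 "2 * \<gamma>" 2] powr_mono[of "2 * \<gamma>" 2 2] \<gamma> by auto
  then have "0 \<le> m" "m \<le> 4 * \<kappa>\<^sup>2 * h powr (2 * \<gamma>)"
    using mult_left_mono[of "4 - 2 powr (2 * \<gamma>)" 4 "\<kappa>\<^sup>2 * h powr (2 * \<gamma>)"] by (auto simp: m_def)
  moreover have "0 \<le> 24 * \<kappa>\<^sup>2 * h powr (2 * \<gamma>) * \<epsilon>" using \<epsilon> by simp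
  ultimately show ?thesis unfolding if_P[OF True] m_def abs_le_iff by linarith
qed

lemma card_grid_points_below:
  fixes h a :: real
  assumes "0 < h" "0 \<le> a"
  shows "real (card {k \<in> {1..n}. real (k - 1) * h < a}) \<le> a / h + 1"
proof -
  have "{k \<in> {1..n}. real (k - 1) * h < a} \<subseteq> {1..nat \<lceil>a / h\<rceil>}"
  proof
    fix k assume k: "k \<in> {k \<in> {1..n}. real (k - 1) * h < a}"
    then have "real (k - 1) < a / h"
      using assms by (simp add: pos_less_divide_eq del: of_nat_diff)
    then have "real (k - 1) < \<lceil>a / h\<rceil>"
      using le_of_int_ceiling[of "a / h"] by linarith
    then show "k \<in> {1..nat \<lceil>a / h\<rceil>}" using k by auto
  qed
  then have "card {k \<in> {1..n}. real (k - 1) * h < a} \<le> nat \<lceil>a / h\<rceil>"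
    using card_mono[of "{1..nat \<lceil>a / h\<rceil>}"] by fastforce
  moreover have "real (nat \<lceil>a / h\<rceil>) \<le> a / h + 1"
    using assms of_int_ceiling_le_add_one[of "a / h"] by simp
  ultimately show ?thesis by linarith
qed

lemma sum_deviation_le:
  fixes d :: "'i \<Rightarrow> real"
  assumes "finite A" "\<And>k. k \<in> A \<Longrightarrow> \<bar>d k - m\<bar> \<le> e + (if k \<in> S then B else 0)"
  shows "\<bar>sum d A - real (card A) * m\<bar> \<le> real (card A) * e + real (card (A \<inter> S)) * B"
proof -
  have "\<bar>sum d A - real (card A) * m\<bar> = \<bar>\<Sum>k\<in>A. d k - m\<bar>"
    by (simp add: sum_subtractf)
  also have "\<dots> \<le> (\<Sum>k\<in>A. e + (if k \<in> S then B else 0))"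
    using assms(2) by (intro order.trans[OF sum_abs sum_mono]) auto
  also have "\<dots> = real (card A) * e + real (card (A \<inter> S)) * B"
    using assms(1) by (simp add: sum.distrib sum.If_cases)
  finally show ?thesis .
qed

lemma integral_V2:
  assumes "second_order_process M T X" "0 < T" "1 \<le> N" "h = T / real N"
  shows "integral\<^sup>L M (V2 T \<gamma> N X) = h powr (1 - 2 * \<gamma>) * (\<Sum>k=1..N-1.
      second_diff_moment M X (real (k - 1) * h) (real (k - 1) * h + h) (real (k - 1) * h + 2 * h))"
proof -
  have h: "0 < h" "real N * h = T" using assms by auto
  have grid: "real (k + 1) * T / real N = real (k - 1) * h + 2 * h"
    "real k * T / real N = real (k - 1) * h + h" "real (k - 1) * T / real N = real (k - 1) * h"
    if "1 \<le> k" for k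
    using that assms by (auto simp: of_nat_diff field_simps)
  have in_range: "real j * h \<in> {0..T}" if "j \<le> N" for j
    using that h mult_right_mono[of "real j" "real N" h] by auto
  have shift: "real (k - 1) * h + h = real k * h" "real (k - 1) * h + 2 * h = real (k + 1) * h"
    if "1 \<le> k" for k
    using that by (auto simp: of_nat_diff algebra_simps)
  have int: "integrable M (\<lambda>\<omega>. (X (real (k - 1) * h + 2 * h) \<omega> - 2 * X (real (k - 1) * h + h) \<omega>
      + X (real (k - 1) * h) \<omega>)\<^sup>2)" if k: "k \<in> {1..N-1}" for k
  proof -
    have k1: "1 \<le> k" using k by simp
    have "real (k - 1) * h \<in> {0..T}" "real (k - 1) * h + h \<in> {0..T}"
      "real (k - 1) * h + 2 * h \<in> {0..T}"
      unfolding shift[OF k1] using k in_range[of "k - 1"] in_range[of k] in_range[of "k + 1"] by auto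
    then show ?thesis by (rule second_diff_moment_polarization(1)[OF assms(1)])
  qed
  have "(real N / T) powr (2 * \<gamma> - 1) = h powr (1 - 2 * \<gamma>)"
    using assms by (simp add: powr_divide powr_minus_divide[symmetric] divide_powr_uminus)
  then have "V2 T \<gamma> N X = (\<lambda>\<omega>. h powr (1 - 2 * \<gamma>) * (\<Sum>k=1..N-1.
      (X (real (k - 1) * h + 2 * h) \<omega> - 2 * X (real (k - 1) * h + h) \<omega> + X (real (k - 1) * h) \<omega>)\<^sup>2))"
    unfolding V2_def
  proof (intro ext arg_cong2[where f = "(*)"] sum.cong)
    fix \<omega> k assume "k \<in> {1..N-1}"
    then have k1: "1 \<le> k" by simp
    show "(X (real (k + 1) * T / real N) \<omega> - 2 * X (real k * T / real N) \<omega>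
        + X (real (k - 1) * T / real N) \<omega>)\<^sup>2 = (X (real (k - 1) * h + 2 * h) \<omega>
        - 2 * X (real (k - 1) * h + h) \<omega> + X (real (k - 1) * h) \<omega>)\<^sup>2"
      by (simp only: grid[OF k1])
  qed simp_all
  then show ?thesis
    using int by (simp add: integral_sum second_diff_moment_def)
qed

lemma integral_V2_deviation_le:
  assumes sop: "second_order_process M T X"
    and T: "0 < T" and N: "1 \<le> N" and h_def: "h = T / real N"
    and \<gamma>: "0 \<le> \<gamma>" "\<gamma> \<le> 1" and \<kappa>: "\<kappa> > 0" and \<epsilon>: "0 \<le> \<epsilon>" "\<epsilon> \<le> 1" and a: "0 \<le> a"
    and step: "\<And>t. a \<le> t \<Longrightarrow> t + h \<le> T \<Longrightarrow>
      \<bar>sigmaX M X t (t + h) / (\<kappa> * h powr \<gamma>) - 1\<bar> \<le> \<epsilon>"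
    and double_step: "\<And>t. a \<le> t \<Longrightarrow> t + 2 * h \<le> T \<Longrightarrow>
      \<bar>sigmaX M X t (t + 2 * h) / (\<kappa> * (2 * h) powr \<gamma>) - 1\<bar> \<le> \<epsilon>"
    and origin: "\<And>y. 0 < y \<Longrightarrow> y \<le> a + 2 * h \<Longrightarrow> sigmaX M X 0 y \<le> C * y powr \<gamma>"
  shows "\<bar>integral\<^sup>L M (V2 T \<gamma> N X) - \<kappa>\<^sup>2 * (4 - 2 powr (2 * \<gamma>)) * T\<bar>
    \<le> 24 * \<kappa>\<^sup>2 * T * \<epsilon> + h powr (1 - 2 * \<gamma>) * (a / h + 1)
         * (18 * C\<^sup>2 * (a + 2 * h) powr (2 * \<gamma>) + 4 * \<kappa>\<^sup>2 * h powr (2 * \<gamma>))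
       + \<kappa>\<^sup>2 * (4 - 2 powr (2 * \<gamma>)) * h"
proof -
  define c where "c = 4 - 2 powr (2 * \<gamma>)"
  define m where "m = \<kappa>\<^sup>2 * h powr (2 * \<gamma>) * c"
  define e where "e = 24 * \<kappa>\<^sup>2 * h powr (2 * \<gamma>) * \<epsilon>"
  define B where "B = 18 * C\<^sup>2 * (a + 2 * h) powr (2 * \<gamma>) + 4 * \<kappa>\<^sup>2 * h powr (2 * \<gamma>)"
  define W where "W = h powr (1 - 2 * \<gamma>)"
  define D where "D k = second_diff_moment M X (real (k - 1) * h) (real (k - 1) * h + h)
    (real (k - 1) * h + 2 * h)" for k
  define S where "S = {k. real (k - 1) * h < a}"
  have h: "0 < h" "real N * h = T" using T N h_def by auto
  have c: "0 \<le> c" "c \<le> 4"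
    using powr_mono[of "2 * \<gamma>" 2 2] \<gamma> by (auto simp: c_def)
  have deviation: "\<bar>D k - m\<bar> \<le> e + (if k \<in> S then B else 0)" if k: "k \<in> {1..N-1}" for k
  proof -
    have "real (k - 1) * h + 2 * h = real (k + 1) * h" using k by (simp add: of_nat_diff algebra_simps)
    also have "\<dots> \<le> real N * h" using k h by (intro mult_right_mono) auto
    finally show ?thesis
      unfolding D_def m_def e_def B_def c_def S_def mem_Collect_eq using h
      by (intro second_diff_moment_deviation_le[OF sop _ _ _ \<gamma> \<kappa> \<epsilon> step double_step origin]) auto
  qed
  have "{1..N-1} \<inter> S = {k \<in> {1..N-1}. real (k - 1) * h < a}" by (auto simp: S_def)
  then have card: "real (card ({1..N-1} \<inter> S)) \<le> a / h + 1"
    using card_grid_points_below[OF h(1) a] by simp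
  have Wh: "W * h powr (2 * \<gamma>) = h"
    using h by (simp add: W_def powr_add[symmetric])
  have N1: "real (N - 1) * h = T - h" using h N by (simp add: of_nat_diff algebra_simps)
  have "\<bar>sum D {1..N-1} - real (N - 1) * m\<bar> \<le> real (N - 1) * e + real (card ({1..N-1} \<inter> S)) * B"
    using sum_deviation_le[of "{1..N-1}" D m e S B] deviation by simp
  also have "\<dots> \<le> real (N - 1) * e + (a / h + 1) * B"
    using card by (intro add_left_mono mult_right_mono) (auto simp: B_def)
  finally have "W * \<bar>sum D {1..N-1} - real (N - 1) * m\<bar> \<le> W * (real (N - 1) * e + (a / h + 1) * B)"
    by (intro mult_left_mono) (auto simp: W_def)
  also have "\<dots> \<le> 24 * \<kappa>\<^sup>2 * T * \<epsilon> + W * (a / h + 1) * B"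
  proof -
    have "W * (real (N - 1) * e) = 24 * \<kappa>\<^sup>2 * \<epsilon> * (real (N - 1) * (W * h powr (2 * \<gamma>)))"
      by (simp add: e_def ac_simps)
    also have "\<dots> \<le> 24 * \<kappa>\<^sup>2 * T * \<epsilon>"
      unfolding Wh N1 using mult_nonneg_nonneg[of "24 * \<kappa>\<^sup>2 * \<epsilon>" h] h \<epsilon>
      by (simp add: algebra_simps)
    finally show ?thesis by (simp add: ring_distribs)
  qed
  finally have sum: "\<bar>W * (sum D {1..N-1} - real (N - 1) * m)\<bar> \<le> 24 * \<kappa>\<^sup>2 * T * \<epsilon> + W * (a / h + 1) * B"
    by (simp add: abs_mult W_def)
  have "W * (real (N - 1) * m) = \<kappa>\<^sup>2 * c * (real (N - 1) * (W * h powr (2 * \<gamma>)))"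
    by (simp add: m_def ac_simps)
  then have "integral\<^sup>L M (V2 T \<gamma> N X) - \<kappa>\<^sup>2 * c * T
      = W * (sum D {1..N-1} - real (N - 1) * m) - \<kappa>\<^sup>2 * c * h"
    unfolding integral_V2[OF sop T N h_def] D_def[symmetric] W_def[symmetric] Wh N1
    by (simp add: algebra_simps)
  moreover have "0 \<le> \<kappa>\<^sup>2 * c * h" using c h by simp
  ultimately show ?thesis
    using sum unfolding c_def[symmetric] W_def[symmetric] B_def[symmetric] abs_le_iff by linarith
qed

lemma tendsto_of_error_bounds:
  fixes u g :: "nat \<Rightarrow> real"
  assumes "g \<longlonglongrightarrow> 0" "0 \<le> K"
    and bound: "\<And>\<epsilon>. 0 < \<epsilon> \<Longrightarrow> \<epsilon> \<le> 1 \<Longrightarrow> eventually (\<lambda>n. \<bar>u n - L\<bar> \<le> K * \<epsilon> + g n) sequentially"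
  shows "u \<longlonglongrightarrow> L"
proof (rule tendstoI)
  fix r :: real assume r: "0 < r"
  define \<epsilon> where "\<epsilon> = min 1 (r / (2 * (K + 1)))"
  have \<epsilon>: "0 < \<epsilon>" "\<epsilon> \<le> 1" using r assms(2) by (auto simp: \<epsilon>_def)
  have "K * \<epsilon> \<le> (K + 1) * (r / (2 * (K + 1)))"
    using \<epsilon> assms(2) by (intro mult_mono) (auto simp: \<epsilon>_def)
  also have "\<dots> = r / 2"
    using assms(2) by (simp add: field_simps add_nonneg_eq_0_iff)
  finally have K\<epsilon>: "K * \<epsilon> \<le> r / 2" .
  have "eventually (\<lambda>n. \<bar>g n\<bar> < r / 2) sequentially"
    using tendstoD[OF assms(1), of "r / 2"] r by simp
  with bound[OF \<epsilon>] show "eventually (\<lambda>n. dist (u n) L < r) sequentially"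
    by eventually_elim (use K\<epsilon> in \<open>auto simp: dist_real_def\<close>)
qed

lemma condC1_local_bound:
  assumes "condC1 M X \<gamma>"
  obtains C d where "0 < d" "\<And>y. 0 < y \<Longrightarrow> y < d \<Longrightarrow> sigmaX M X 0 y \<le> C * y powr \<gamma>"
proof -
  obtain C where "eventually (\<lambda>y. norm (sigmaX M X 0 y) \<le> C * norm (y powr \<gamma>)) (at_right 0)"
    using assms unfolding condC1_def by (elim landau_o.bigE)
  then obtain d where "d > 0" "\<And>y. 0 < y \<Longrightarrow> y < d \<Longrightarrow> sigmaX M X 0 y \<le> C * y powr \<gamma>"
    unfolding eventually_at_right_field by (auto simp: sigmaX_def)
  then show ?thesis by (rule that)
qed

lemma three_quarter_power_in_PsiClass: "(\<lambda>h. h powr (3 / 4)) \<in> PsiClass T"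
  unfolding PsiClass_def
proof (intro CollectI conjI)
  show "continuous_on {0<..T} (\<lambda>h::real. h powr (3 / 4))"
    by (intro continuous_intros) auto
  show "((\<lambda>h::real. h powr (3 / 4)) \<longlongrightarrow> 0) (at_right 0)" by real_asymp
  show "filterlim (\<lambda>h::real. h powr (3 / 4) / h) at_top (at_right 0)" by real_asymp
  show "((\<lambda>h::real. h * (h powr (3 / 4) / h) ^ 3) \<longlongrightarrow> 0) (at_right 0)" by real_asymp
qed simp

text \<open>The first summand bounds the boundary layer \<open>[0, \<phi>(2h))\<close>, about which (C2) says nothing;
  the second accounts for the sum in \<open>V2\<close> having \<open>N - 1\<close> rather than \<open>N\<close> terms.\<close>

definition V2_error_bound :: "real \<Rightarrow> real \<Rightarrow> real \<Rightarrow> (real \<Rightarrow> real) \<Rightarrow> real \<Rightarrow> real" where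
  "V2_error_bound \<gamma> \<kappa> C \<phi> h = h powr (1 - 2 * \<gamma>) * (\<phi> (2 * h) / h + 1)
      * (18 * C\<^sup>2 * (\<phi> (2 * h) + 2 * h) powr (2 * \<gamma>) + 4 * \<kappa>\<^sup>2 * h powr (2 * \<gamma>))
    + \<kappa>\<^sup>2 * (4 - 2 powr (2 * \<gamma>)) * h"

lemma regular_mesh_tendsto_0:
  assumes "0 < T" "strict_mono N"
  shows "filterlim (\<lambda>n. T / real (N n)) (at_right 0) sequentially"
proof -
  have "filterlim (\<lambda>x. T / x) (at_right 0) at_top" using assms(1) by real_asymp
  moreover have "filterlim (\<lambda>n. real (N n)) at_top sequentially"
    by (rule filterlim_compose[OF filterlim_real_sequentially filterlim_subseq[OF assms(2)]])
  ultimately show ?thesis by (rule filterlim_compose)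
qed

lemma eventually_integral_V2_deviation_le:
  assumes sop: "second_order_process M T X" and T: "0 < T" and N: "strict_mono N"
    and \<gamma>: "0 \<le> \<gamma>" "\<gamma> \<le> 1" and \<kappa>: "\<kappa> > 0" and C2: "condC2 M T X \<gamma> \<kappa>"
    and \<epsilon>: "0 < \<epsilon>" "\<epsilon> \<le> 1"
    and \<phi>: "\<phi> \<in> PsiClass T" "mono_on {0<..} \<phi>" "\<And>h. 0 < h \<Longrightarrow> 0 \<le> \<phi> h"
    and d: "0 < d" and origin: "\<And>y. 0 < y \<Longrightarrow> y < d \<Longrightarrow> sigmaX M X 0 y \<le> C * y powr \<gamma>"
  shows "eventually (\<lambda>n. \<bar>integral\<^sup>L M (V2 T \<gamma> (N n) X) - \<kappa>\<^sup>2 * (4 - 2 powr (2 * \<gamma>)) * T\<bar>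
    \<le> 24 * \<kappa>\<^sup>2 * T * \<epsilon> + V2_error_bound \<gamma> \<kappa> C \<phi> (T / real (N n))) sequentially"
proof -
  define hs where "hs n = T / real (N n)" for n
  have hs: "filterlim hs (at_right 0) sequentially"
    unfolding hs_def using T N by (rule regular_mesh_tendsto_0)
  have "filterlim (\<lambda>x. 2 * x) (at_right 0) (at_right (0::real))" by real_asymp
  then have hs2: "filterlim (\<lambda>n. 2 * hs n) (at_right 0) sequentially"
    using hs by (rule filterlim_compose)
  have C2\<epsilon>: "eventually (\<lambda>\<delta>. \<forall>t h. \<phi> \<delta> \<le> t \<and> t \<le> T - \<delta> \<and> 0 < h \<and> h \<le> \<delta> \<longrightarrow>
      \<bar>sigmaX M X t (t + h) / (\<kappa> * h powr \<gamma>) - 1\<bar> \<le> \<epsilon>) (at_right 0)"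
    using C2 \<phi>(1) \<epsilon> unfolding condC2_def by blast
  have "((\<lambda>n. \<phi> (2 * hs n)) \<longlongrightarrow> 0) sequentially"
    using \<phi>(1) hs2 unfolding PsiClass_def by (auto intro: filterlim_compose)
  moreover have "(hs \<longlongrightarrow> 0) sequentially" using hs by (simp add: filterlim_at)
  ultimately have "((\<lambda>n. \<phi> (2 * hs n) + 2 * hs n) \<longlongrightarrow> 0) sequentially"
    by (auto intro: tendsto_add_zero tendsto_mult_right_zero)
  then have small: "eventually (\<lambda>n. \<phi> (2 * hs n) + 2 * hs n < d) sequentially"
    using d by (rule order_tendstoD)
  have pos: "eventually (\<lambda>n. 1 \<le> N n) sequentially"
    using hs unfolding hs_def filterlim_at by (auto elim!: eventually_mono)
  from filterlim_iff[THEN iffD1, OF hs, rule_format, OF C2\<epsilon>]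
    filterlim_iff[THEN iffD1, OF hs2, rule_format, OF C2\<epsilon>] small pos
    eventually_at_right_less[THEN filterlim_iff[THEN iffD1, OF hs, rule_format]]
  show ?thesis
  proof eventually_elim
    case (elim n)
    define h where "h = hs n"
    have h: "0 < h" using elim(5) by (simp add: h_def)
    have "\<phi> h \<le> \<phi> (2 * h)" using h \<phi>(2) by (auto intro: mono_onD)
    then have "\<bar>integral\<^sup>L M (V2 T \<gamma> (N n) X) - \<kappa>\<^sup>2 * (4 - 2 powr (2 * \<gamma>)) * T\<bar>
      \<le> 24 * \<kappa>\<^sup>2 * T * \<epsilon> + h powr (1 - 2 * \<gamma>) * (\<phi> (2 * h) / h + 1)
         * (18 * C\<^sup>2 * (\<phi> (2 * h) + 2 * h) powr (2 * \<gamma>) + 4 * \<kappa>\<^sup>2 * h powr (2 * \<gamma>))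
       + \<kappa>\<^sup>2 * (4 - 2 powr (2 * \<gamma>)) * h"
      using elim(1,2,3) h \<phi>(3)[of "2 * h"] origin
      by (intro integral_V2_deviation_le[OF sop T elim(4) _ \<gamma> \<kappa> less_imp_le[OF \<epsilon>(1)] \<epsilon>(2)])
        (auto simp: h_def hs_def)
    then show ?case
      unfolding V2_error_bound_def hs_def[symmetric] h_def[symmetric] by linarith
  qed
qed

theorem corollary1:
  fixes M :: "'a measure" and T \<gamma> \<kappa> :: real and N :: "nat \<Rightarrow> nat"
    and X :: "real \<Rightarrow> 'a \<Rightarrow> real"
  assumes "prob_space M" and "T > 0" and "strict_mono N"
    and "second_order_process M T X" and "mean_zero M T X"
    and "0 < \<gamma>" and "\<gamma> < 1" and "\<kappa> > 0"
    and "condC1 M X \<gamma>" and "condC2 M T X \<gamma> \<kappa>"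
  shows "(\<lambda>n. integral\<^sup>L M (V2 T \<gamma> (N n) X))
           \<longlonglongrightarrow> \<kappa>\<^sup>2 * (4 - 2 powr (2 * \<gamma>)) * T"
proof -
  define \<phi> :: "real \<Rightarrow> real" where "\<phi> = (\<lambda>h. h powr (3 / 4))"
  have \<phi>: "\<phi> \<in> PsiClass T" "mono_on {0<..} \<phi>" "\<And>h. 0 < h \<Longrightarrow> 0 \<le> \<phi> h"
    unfolding \<phi>_def using three_quarter_power_in_PsiClass by (auto intro!: mono_onI powr_mono2)
  obtain C d where d: "0 < d" and origin: "\<And>y. 0 < y \<Longrightarrow> y < d \<Longrightarrow> sigmaX M X 0 y \<le> C * y powr \<gamma>"
    using condC1_local_bound[OF assms(9)] by blast
  have "(V2_error_bound \<gamma> \<kappa> C \<phi> \<longlongrightarrow> 0) (at_right 0)"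
    unfolding V2_error_bound_def \<phi>_def using assms(6,7) by real_asymp
  then have "(\<lambda>n. V2_error_bound \<gamma> \<kappa> C \<phi> (T / real (N n))) \<longlonglongrightarrow> 0"
    using regular_mesh_tendsto_0[OF assms(2,3)] by (rule filterlim_compose)
  then show ?thesis
  proof (rule tendsto_of_error_bounds)
    show "0 \<le> 24 * \<kappa>\<^sup>2 * T" using assms(2) by simp
    fix \<epsilon> :: real assume "0 < \<epsilon>" "\<epsilon> \<le> 1"
    from eventually_integral_V2_deviation_le[OF assms(4,2,3) less_imp_le[OF assms(6)]
      less_imp_le[OF assms(7)] assms(8,10) this \<phi> d origin]
    show "eventually (\<lambda>n. \<bar>integral\<^sup>L M (V2 T \<gamma> (N n) X) - \<kappa>\<^sup>2 * (4 - 2 powr (2 * \<gamma>)) * T\<bar>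
      \<le> 24 * \<kappa>\<^sup>2 * T * \<epsilon> + V2_error_bound \<gamma> \<kappa> C \<phi> (T / real (N n))) sequentially" .
  qed
qed

end
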